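(* Let $r \geq 1$ be an integer and define $f \in \mathbb{Z}^{2r+1}$ by $f_1 = f_2 = f_3 = 1$ and $f_i = f_{i-2} + f_{i-1}$ for $i = 4, \ldots, 2r+1$. Then for every integer $\tau$ with $0 \leq \tau \leq \sum_{i=1}^{2r+1} f_i$, there exists a subset $S \subseteq \{1, \ldots, 2r+1\}$ such that $\tau = \sum_{i \in S} f_i$. *)

theory Defs
  imports Main
begin

text \<open>The sequence f with f 1 = f 2 = f 3 = 1 and f i = f (i-2) + f (i-1) for i \<ge> 4.
  Only indices 1..2r+1 are relevant; the value at index 0 is an arbitrary convention (0).\<close>
fun fseq :: "nat \<Rightarrow> int" where
  "fseq 0 = 0"
| "fseq (Suc 0) = 1"
| "fseq (Suc (Suc 0)) = 1"
| "fseq (Suc (Suc (Suc 0))) = 1"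
| "fseq (Suc (Suc (Suc (Suc n)))) = fseq (Suc (Suc n)) + fseq (Suc (Suc (Suc n)))"

end

theory Submission
  imports Defs
begin

text \<open>A sequence in which every term exceeds the sum of its predecessors by at most one
  (Brown's completeness criterion) represents every integer between 0 and its total as a
  subset sum: induct on the length, and take the last term into the subset exactly when
  the target exceeds the sum of the shorter sequence. Since f i = f (i-2) + f (i-1) with
  non-negative terms, the sequence f satisfies the criterion.\<close>

lemma subset_sum_representation:
  fixes a :: "nat \<Rightarrow> int" and \<tau> :: int
  assumes "\<And>k. 1 \<le> k \<Longrightarrow> k \<le> n \<Longrightarrow> a k \<le> 1 + (\<Sum>i = 1..<k. a i)"
    and "0 \<le> \<tau>" and "\<tau> \<le> (\<Sum>i = 1..n. a i)"
  shows "\<exists>S. S \<subseteq> {1..n} \<and> \<tau> = (\<Sum>i\<in>S. a i)"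
  using assms
proof (induction n arbitrary: \<tau>)
  case 0
  then show ?case by (intro exI[of _ "{}"]) auto
next
  case (Suc n)
  have complete_n: "\<And>k. 1 \<le> k \<Longrightarrow> k \<le> n \<Longrightarrow> a k \<le> 1 + (\<Sum>i = 1..<k. a i)"
    using Suc.prems(1) by simp
  show ?case
  proof (cases "\<tau> \<le> (\<Sum>i = 1..n. a i)")
    case True
    then obtain S where "S \<subseteq> {1..n}" "\<tau> = (\<Sum>i\<in>S. a i)"
      using Suc.IH[OF complete_n Suc.prems(2)] by blast
    then show ?thesis by (intro exI[of _ S]) auto
  next
    case False
    have "a (Suc n) \<le> 1 + (\<Sum>i = 1..n. a i)"
      using Suc.prems(1)[of "Suc n"] by (simp add: atLeastLessThanSuc_atLeastAtMost)
    moreover have "\<tau> \<le> (\<Sum>i = 1..n. a i) + a (Suc n)"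
      using Suc.prems(3) by simp
    ultimately have "0 \<le> \<tau> - a (Suc n)" "\<tau> - a (Suc n) \<le> (\<Sum>i = 1..n. a i)"
      using False by linarith+
    then obtain S where S: "S \<subseteq> {1..n}" "\<tau> - a (Suc n) = (\<Sum>i\<in>S. a i)"
      using Suc.IH[OF complete_n] by blast
    then have "finite S" "Suc n \<notin> S"
      using finite_subset by auto
    with S show ?thesis
      by (intro exI[of _ "insert (Suc n) S"]) auto
  qed
qed

lemma fseq_nonneg: "fseq n \<ge> 0"
  by (induction n rule: fseq.induct) auto

lemma fseq_le_Suc_sum_lessThan: "fseq k \<le> 1 + (\<Sum>i = 1..<k. fseq i)"
proof (cases k rule: fseq.cases)
  case (5 n)
  have "(\<Sum>i\<in>{Suc (Suc n), Suc (Suc (Suc n))}. fseq i) \<le> (\<Sum>i = 1..<k. fseq i)"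
    by (rule sum_mono2) (auto simp: 5 fseq_nonneg)
  then show ?thesis using 5 by simp
qed (simp_all add: fseq_nonneg numeral_eq_Suc atLeastLessThanSuc)

theorem lemma2:
  fixes r :: nat and \<tau> :: int
  assumes "r \<ge> 1"
    and "0 \<le> \<tau>"
    and "\<tau> \<le> (\<Sum>i = 1..2*r+1. fseq i)"
  shows "\<exists>S. S \<subseteq> {1..2*r+1} \<and> \<tau> = (\<Sum>i\<in>S. fseq i)"
  using subset_sum_representation[OF fseq_le_Suc_sum_lessThan assms(2,3)] .

end
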